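(* Let $F$ be a face of $\Delta$, let $\mathfrak r$ be the orthogonal complement of $\mathfrak n\cap\mathbb R^{I_F}$ in $\mathfrak n$, and let $z\in(\mathbb C^* )^{F^c}$. Then there exist a unique point $x\in\Psi_\Delta^{-1}(0)$, a unique point $\xi\in F$ and a unique $Y\in\mathfrak r$ such that $Az\cap\Psi_\Delta^{-1}(0)=\{x\}$, $\exp(iY)z=x$, and $\langle\xi,X_j\rangle-\lambda_j=|x_j|^2$ for $j=1,\dots,d$.
   Context: Let $\mathfrak d$ be an $n$-dimensional real vector space. Let $\Delta\subset\mathfrak d^*$ be an $n$-dimensional convex polytope with $d$ facets, $\Delta=\bigcap_{j=1}^d\{\mu\in\mathfrak d^*:\langle\mu,X_j\rangle\ge\lambda_j\}$, with chosen inward normals $X_1,\dots,X_d\in\mathfrak d$ and $\lambda_j\in\mathbb R$. For each face $F$, $I_F$ is such that $F=\{\mu\in\Delta:\langle\mu,X_j\rangle=\lambda_j\iff j\in I_F\}$. $(\mathbb C^* )^{F^c}=\{z\in\mathbb C^d:z_j=0\ (j\in I_F),\ z_j\ne0\ (j\notin I_F)\}$; $\mathbb R^{I_F}\subseteq\mathbb R^d$ is the coordinate subspace spanned by $e_j$, $j\in I_F$. $\pi:\mathbb R^d\to\mathfrak d$, $e_j\mapsto X_j$; $\mathfrak n=\ker\pi$ with the inner product induced from the standard one on $\mathbb R^d$; $\iota:\mathfrak n\to\mathbb R^d$ the inclusion. $A=\{\exp(iY):Y\in\mathfrak n\}$ acts on $\mathbb C^d$ by $z_j\mapsto e^{-2\pi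 Y_j}z_j$. $\Psi_\Delta:\mathbb C^d\to\mathfrak n^*$, $\Psi_\Delta(z)=\sum_{j=1}^d(|z_j|^2+\lambda_j)\iota^*(e_j^* )$. *)

theory Defs
  imports "HOL-Analysis.Analysis"
begin

text \<open>Conventions: the n-dimensional space d is real^'n, its dual is identified with
real^'n via the dot product; facets are indexed by the finite type 'd (so d = CARD('d)).\<close>

definition Delta :: "('d::finite \<Rightarrow> real^'n::finite) \<Rightarrow> ('d \<Rightarrow> real) \<Rightarrow> (real^'n) set" where
  "Delta X lam = {\<mu>. \<forall>j. \<mu> \<bullet> X j \<ge> lam j}"

definition facetj :: "('d::finite \<Rightarrow> real^'n::finite) \<Rightarrow> ('d \<Rightarrow> real) \<Rightarrow> 'd \<Rightarrow> (real^'n) set" where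
  "facetj X lam j = {\<mu> \<in> Delta X lam. \<mu> \<bullet> X j = lam j}"

definition faceI :: "('d::finite \<Rightarrow> real^'n::finite) \<Rightarrow> ('d \<Rightarrow> real) \<Rightarrow> 'd set \<Rightarrow> (real^'n) set" where
  "faceI X lam I = {\<mu> \<in> Delta X lam. \<forall>j. \<mu> \<bullet> X j = lam j \<longleftrightarrow> j \<in> I}"

definition piX :: "('d::finite \<Rightarrow> real^'n::finite) \<Rightarrow> real^'d \<Rightarrow> real^'n" where
  "piX X t = (\<Sum>j\<in>UNIV. (t $ j) *\<^sub>R X j)"

definition nker :: "('d::finite \<Rightarrow> real^'n::finite) \<Rightarrow> (real^'d) set" where
  "nker X = {t. piX X t = 0}"

definition coord_sub :: "'d::finite set \<Rightarrow> (real^'d) set" where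
  "coord_sub I = {t. \<forall>j. j \<notin> I \<longrightarrow> t $ j = 0}"

definition rperp :: "('d::finite \<Rightarrow> real^'n::finite) \<Rightarrow> 'd set \<Rightarrow> (real^'d) set" where
  "rperp X I = {Y \<in> nker X. \<forall>W \<in> nker X \<inter> coord_sub I. Y \<bullet> W = 0}"

text \<open>Action of exp(iY) on C^d.\<close>
definition Aact :: "real^'d::finite \<Rightarrow> complex^'d \<Rightarrow> complex^'d" where
  "Aact Y z = (\<chi> j. complex_of_real (exp (- 2 * pi * (Y $ j))) * (z $ j))"

definition Aorbit :: "('d::finite \<Rightarrow> real^'n::finite) \<Rightarrow> complex^'d \<Rightarrow> (complex^'d) set" where
  "Aorbit X z = {Aact Y z | Y. Y \<in> nker X}"

text \<open>Psi_Delta(z), as a linear functional evaluated on Y in n: sum_j (|z_j|^2+lam_j) Y_j.\<close>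
definition Psi :: "('d::finite \<Rightarrow> real) \<Rightarrow> complex^'d \<Rightarrow> real^'d \<Rightarrow> real" where
  "Psi lam z Y = (\<Sum>j\<in>UNIV. ((cmod (z $ j))\<^sup>2 + lam j) * (Y $ j))"

definition Psi_zero :: "('d::finite \<Rightarrow> real^'n::finite) \<Rightarrow> ('d \<Rightarrow> real) \<Rightarrow> (complex^'d) set" where
  "Psi_zero X lam = {z. \<forall>Y \<in> nker X. Psi lam z Y = 0}"

definition Cstar_Fc :: "'d::finite set \<Rightarrow> (complex^'d) set" where
  "Cstar_Fc I = {z. \<forall>j. z $ j = 0 \<longleftrightarrow> j \<in> I}"

end

theory Submission
  imports Defs
begin

(* Fix a point xi0 of the face F and z in (C* )^(F^c).  Put s_j = <xi0,X_j> - lam_j, so that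
   s_j >= 0 with equality exactly when z_j = 0.  The "potential"
       P(Y) = sum_j |z_j|^2 exp(-4 pi Y_j) + 4 pi s_j Y_j
   restricted to the subspace n = ker pi is coercive in the directions where z_j <> 0 and
   constant in the others, so it attains a minimum on n.  Its derivative along W in n is
   -4 pi Psi(exp(iY) z)(W), so a minimiser Y1 gives a point x = exp(iY1) z of Psi^-1(0);
   strict monotonicity of exp shows that this point of the orbit is unique.  The vector
   (|x_j|^2 + lam_j)_j annihilates n, hence lies in the range of the adjoint of pi, which
   produces xi; boundedness of Delta forces the X_j to separate points, giving uniqueness of xi.
   Finally Y is the orthogonal projection of Y1 onto the complement r of n /\ R^I. *)

(* The second-order Taylor bound for exp on [0,oo), obtained by squaring 1 + u/2 <= exp(u/2). *)
lemma exp_ge_quadratic: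
  fixes u :: real
  assumes "0 \<le> u"
  shows "1 + u + u\<^sup>2 / 4 \<le> exp u"
proof -
  have "(1 + u/2)\<^sup>2 \<le> exp (u/2) ^ 2"
    using assms by (intro power_mono) auto
  also have "\<dots> = exp u"
    by (simp add: exp_double[symmetric])
  finally show ?thesis
    by (simp add: power2_eq_square field_simps)
qed

(* A function a exp(-cy) + by grows at least like b|y|; this yields coercivity of the potential. *)
lemma exp_linear_lower_bound:
  fixes a b c y :: real
  assumes "0 < a" "0 < c"
  shows "b * \<bar>y\<bar> - 4 * (b/c)\<^sup>2 / a \<le> a * exp (- c * y) + b * y"
proof (cases "0 \<le> y")
  case True
  have "0 \<le> 4 * (b/c)\<^sup>2 / a" "0 < a * exp (- c * y)"
    using assms by auto
  then show ?thesis
    using True by simp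
next
  case False
  define u where "u = - c * y"
  have u: "0 \<le> u"
    using False assms by (simp add: u_def mult_nonneg_nonpos)
  have lin: "b * \<bar>y\<bar> = (b/c) * u" "b * y = - (b/c) * u" "a * exp (- c * y) = a * exp u"
    using False assms by (auto simp: u_def)
  have "a * (1 + u + u\<^sup>2 / 4) \<le> a * exp u"
    using exp_ge_quadratic[OF u] assms by simp
  moreover have "0 \<le> (a/2 * u - 2 * b/c)\<^sup>2 / a"
    using assms by simp
  moreover have "(a/2 * u - 2 * b/c)\<^sup>2 / a = a * (u\<^sup>2/4) - 2 * (b/c) * u + 4 * (b/c)\<^sup>2 / a"
    using assms by (simp add: power2_eq_square field_simps)
  moreover have "0 \<le> a * (1 + u)"
    using u assms by simp
  ultimately show ?thesis
    unfolding lin by (simp add: algebra_simps)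
qed

lemma continuous_attains_inf_sublevel:
  fixes H :: "'a::{real_normed_vector,heine_borel} \<Rightarrow> real"
  assumes "closed S" "p \<in> S" "continuous_on S H" "bounded {v \<in> S. H v \<le> H p}"
  shows "\<exists>v0\<in>S. \<forall>v\<in>S. H v0 \<le> H v"
proof -
  obtain R where R: "\<And>v. v \<in> S \<Longrightarrow> H v \<le> H p \<Longrightarrow> norm v \<le> R"
    using assms(4) unfolding bounded_iff by blast
  define K where "K = S \<inter> cball 0 R"
  have "compact K" "p \<in> K"
    using assms(1,2) R[of p] by (auto simp: K_def compact_Int_closed)
  moreover have "continuous_on K H"
    using assms(3) by (rule continuous_on_subset) (simp add: K_def)
  ultimately obtain v0 where "v0 \<in> K" and v0: "\<And>v. v \<in> K \<Longrightarrow> H v0 \<le> H v"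
    using continuous_attains_inf[of K H] by blast
  moreover have "H v0 \<le> H v" if "v \<in> S" for v
  proof (cases "norm v \<le> R")
    case True
    then show ?thesis using that v0 by (simp add: K_def)
  next
    case False
    then show ?thesis using R[OF that] v0[OF \<open>p \<in> K\<close>] by linarith
  qed
  ultimately show ?thesis
    by (auto simp: K_def)
qed

lemma linear_piX: "linear (piX X)"
  by (rule linearI) (simp_all add: piX_def scaleR_add_left sum.distrib scaleR_sum_right)

lemma nker_eq_kernel: "nker X = piX X -` {0}"
  by (auto simp: nker_def)

lemma subspace_nker: "subspace (nker X)"
  unfolding nker_def using linear_piX by (rule linear_subspace_kernel)

lemma inner_piX: "\<xi> \<bullet> piX X w = (\<Sum>j\<in>UNIV. w $ j * (\<xi> \<bullet> X j))"
  by (simp add: piX_def inner_sum_right)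

lemma adjoint_piX: "adjoint (piX X) = (\<lambda>\<xi>. \<chi> j. \<xi> \<bullet> X j)"
proof (rule adjoint_unique, intro allI)
  fix t \<xi>
  have "piX X t \<bullet> \<xi> = \<xi> \<bullet> piX X t"
    by (rule inner_commute)
  then show "piX X t \<bullet> \<xi> = t \<bullet> (\<chi> j. \<xi> \<bullet> X j)"
    by (simp add: inner_piX inner_vec_def[of t])
qed

lemma orthogonal_comp_nker: "(nker X)\<^sup>\<bottom> = range (\<lambda>\<xi>. \<chi> j. \<xi> \<bullet> X j)"
proof -
  have "subspace (range (adjoint (piX X)))"
    using adjoint_linear[OF linear_piX] by (rule linear_subspace_image) simp
  moreover have "nker X = (range (adjoint (piX X)))\<^sup>\<bottom>"
    using ker_orthogonal_comp_adjoint[OF linear_piX] by (simp add: nker_eq_kernel)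
  ultimately show ?thesis
    using orthogonal_comp_self by (simp add: adjoint_piX)
qed

(* If Delta is bounded and nonempty, the normals X_j separate points: a direction d with
   <d, X_j> = 0 for all j would give a line xi + t d inside Delta. *)
lemma Delta_bounded_normals_injective:
  assumes "bounded (Delta X lam)" "\<xi> \<in> Delta X lam" "\<And>j. \<xi> \<bullet> X j = \<xi>' \<bullet> X j"
  shows "\<xi> = \<xi>'"
proof (rule ccontr)
  assume "\<xi> \<noteq> \<xi>'"
  define d where "d = \<xi>' - \<xi>"
  have "0 < norm d"
    using \<open>\<xi> \<noteq> \<xi>'\<close> by (simp add: d_def)
  obtain B where B: "\<And>\<mu>. \<mu> \<in> Delta X lam \<Longrightarrow> norm \<mu> \<le> B"
    using assms(1) unfolding bounded_iff by blast
  define t where "t = (B + norm \<xi> + 1) / norm d"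
  have "\<xi> + t *\<^sub>R d \<in> Delta X lam"
    using assms(2,3) by (simp add: Delta_def d_def inner_add_left inner_diff_left)
  then have "norm (t *\<^sub>R d) \<le> B + norm \<xi>"
    using B norm_triangle_ineq4[of "\<xi> + t *\<^sub>R d" \<xi>] by force
  moreover have "0 \<le> B"
    using B[OF assms(2)] norm_ge_zero order_trans by blast
  then have "norm (t *\<^sub>R d) = B + norm \<xi> + 1"
    using \<open>0 < norm d\<close> by (simp add: t_def)
  ultimately show False
    by simp
qed

(* exp(-c .) is strictly decreasing; written as a product inequality for use inside a sum. *)
lemma exp_neg_antimono_product:
  fixes a b c :: real
  assumes "0 < c"
  shows "(exp (- c * a) - exp (- c * b)) * (a - b) \<le> 0"
    and "(exp (- c * a) - exp (- c * b)) * (a - b) = 0 \<longleftrightarrow> a = b"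
proof -
  have "(exp (- c * a) - exp (- c * b)) * (a - b) < 0" if "a < b" for a b
    using assms that by (intro mult_pos_neg) auto
  from this[of a b] this[of b a]
  show "(exp (- c * a) - exp (- c * b)) * (a - b) \<le> 0"
    and "(exp (- c * a) - exp (- c * b)) * (a - b) = 0 \<longleftrightarrow> a = b"
    by (cases a b rule: linorder_cases; simp add: algebra_simps)+
qed

lemma Aact_nth [simp]: "Aact Y z $ j = complex_of_real (exp (- 2 * pi * Y $ j)) * z $ j"
  by (simp add: Aact_def)

lemma norm_Aact_sq: "(cmod (Aact Y z $ j))\<^sup>2 = (cmod (z $ j))\<^sup>2 * exp (- (4 * pi) * Y $ j)"
proof -
  have "(cmod (Aact Y z $ j))\<^sup>2 = (exp (- 2 * pi * Y $ j))\<^sup>2 * (cmod (z $ j))\<^sup>2"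
    by (simp add: norm_mult power_mult_distrib)
  also have "(exp (- 2 * pi * Y $ j))\<^sup>2 = exp (- (4 * pi) * Y $ j)"
    by (simp flip: exp_double)
  finally show ?thesis
    by simp
qed

lemma Aact_Cstar_Fc: "z \<in> Cstar_Fc I \<Longrightarrow> Aact Y z \<in> Cstar_Fc I"
  by (simp add: Cstar_Fc_def)

lemma Aact_eq_iff:
  assumes "z \<in> Cstar_Fc I"
  shows "Aact Y z = Aact Y' z \<longleftrightarrow> Y - Y' \<in> coord_sub I"
  using assms by (auto simp: Cstar_Fc_def coord_sub_def vec_eq_iff)

(* Uniqueness: an orbit of the group exp(i n) meets Psi^-1(0) in at most one point.  For two such
   points the difference Psi(x1) - Psi(x2) evaluated at W = Y1 - Y2 is a sum of nonpositive terms. *)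
lemma orbit_Psi_zero_at_most_one:
  assumes "Y1 \<in> nker X" "Y2 \<in> nker X" "Aact Y1 z \<in> Psi_zero X lam" "Aact Y2 z \<in> Psi_zero X lam"
  shows "Aact Y1 z = Aact Y2 z"
proof -
  define W where "W = Y1 - Y2"
  define t where "t j = (cmod (z $ j))\<^sup>2 * ((exp (- (4*pi) * Y1 $ j) - exp (- (4*pi) * Y2 $ j)) * W $ j)" for j
  have "W \<in> nker X"
    unfolding W_def using subspace_nker assms(1,2) by (rule subspace_diff)
  have "(\<Sum>j\<in>UNIV. t j) = Psi lam (Aact Y1 z) W - Psi lam (Aact Y2 z) W"
    unfolding t_def Psi_def norm_Aact_sq by (simp add: algebra_simps flip: sum_subtractf)
  also have "\<dots> = 0"
    using assms(3,4) \<open>W \<in> nker X\<close> by (simp add: Psi_zero_def)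
  finally have "(\<Sum>j\<in>UNIV. - t j) = 0"
    by (simp add: sum_negf)
  moreover have "t j \<le> 0" for j
    using exp_neg_antimono_product(1)[of "4*pi" "Y1 $ j" "Y2 $ j"]
    by (simp add: t_def W_def mult_nonneg_nonpos)
  ultimately have "t j = 0" for j
    using sum_nonneg_eq_0_iff[of UNIV "\<lambda>j. - t j"] by simp
  then have "z $ j = 0 \<or> Y1 $ j = Y2 $ j" for j
    using exp_neg_antimono_product(2)[of "4*pi" "Y1 $ j" "Y2 $ j"] by (simp add: t_def W_def)
  then show ?thesis
    by (auto simp: vec_eq_iff)
qed

(* The potential whose critical points on n correspond to orbit points in Psi^-1(0). *)
definition potential :: "complex^'d::finite \<Rightarrow> ('d \<Rightarrow> real) \<Rightarrow> real^'d \<Rightarrow> real" where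
  "potential z s Y = (\<Sum>j\<in>UNIV. (cmod (z $ j))\<^sup>2 * exp (- (4*pi) * Y $ j) + 4*pi * s j * Y $ j)"

lemma potential_sublevel_bounded:
  assumes "\<And>j. 0 \<le> s j" "\<And>j. s j = 0 \<longleftrightarrow> z $ j = 0"
  shows "bounded {v. (\<forall>j. z $ j = 0 \<longrightarrow> v $ j = 0) \<and> potential z s v \<le> M}"
proof -
  define K where "K j = 4 * (s j)\<^sup>2 / (cmod (z $ j))\<^sup>2" for j
  define C where "C = M + (\<Sum>j\<in>UNIV. K j)"
  have lower: "4*pi * s j * \<bar>y\<bar> - K j \<le> (cmod (z $ j))\<^sup>2 * exp (- (4*pi) * y) + 4*pi * s j * y"
    for j y
  proof (cases "z $ j = 0")
    case True
    then show ?thesis using assms(2)[of j] by (simp add: K_def)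
  next
    case False
    then show ?thesis
      using exp_linear_lower_bound[of "(cmod (z $ j))\<^sup>2" "4*pi" "4*pi * s j" y] by (simp add: K_def)
  qed
  have coord: "\<bar>v $ j\<bar> \<le> C / (4*pi * s j)"
    if v: "\<forall>j. z $ j = 0 \<longrightarrow> v $ j = 0" "potential z s v \<le> M" for v j
  proof (cases "z $ j = 0")
    case True
    then show ?thesis using v assms(2)[of j] by simp
  next
    case False
    have "4*pi * s j * \<bar>v $ j\<bar> \<le> (\<Sum>k\<in>UNIV. 4*pi * s k * \<bar>v $ k\<bar>)"
      using assms(1) by (intro member_le_sum) auto
    also have "\<dots> - (\<Sum>k\<in>UNIV. K k) \<le> potential z s v"
      unfolding potential_def sum_subtractf[symmetric] by (intro sum_mono lower)
    finally have "4*pi * s j * \<bar>v $ j\<bar> \<le> C"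
      using v(2) by (simp add: C_def)
    moreover have "0 < 4*pi * s j"
      using assms[of j] False by (simp add: less_le)
    ultimately show ?thesis
      by (simp add: pos_le_divide_eq mult.commute)
  qed
  have "norm v \<le> (\<Sum>j\<in>UNIV. C / (4*pi * s j))"
    if "\<forall>j. z $ j = 0 \<longrightarrow> v $ j = 0" "potential z s v \<le> M" for v
  proof -
    have "norm v \<le> (\<Sum>j\<in>UNIV. \<bar>v $ j\<bar>)"
      by (rule norm_le_l1_cart)
    also have "\<dots> \<le> (\<Sum>j\<in>UNIV. C / (4*pi * s j))"
      using coord[OF that] by (intro sum_mono)
    finally show ?thesis .
  qed
  then show ?thesis
    unfolding bounded_iff by blast
qed

(* The potential attains its minimum on n.  It does not depend on the coordinates where z_j = 0,
   so it suffices to minimise over the projection of n onto the remaining coordinates. *)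
lemma potential_attains_min:
  fixes z :: "complex^'d::finite" and X :: "'d \<Rightarrow> real^'n::finite"
  assumes "\<And>j. 0 \<le> s j" "\<And>j. s j = 0 \<longleftrightarrow> z $ j = 0"
  shows "\<exists>Y1\<in>nker X. \<forall>Y\<in>nker X. potential z s Y1 \<le> potential z s Y"
proof -
  define P where "P Y = (\<chi> j. if z $ j = 0 then 0 else Y $ j)" for Y :: "real^'d"
  have "linear P"
    by (rule linearI) (simp_all add: P_def vec_eq_iff)
  have potential_P: "potential z s (P Y) = potential z s Y" for Y
    unfolding potential_def P_def by (rule sum.cong) (auto simp: assms(2))
  define V where "V = P ` nker X"
  have "subspace V"
    unfolding V_def using \<open>linear P\<close> subspace_nker by (rule linear_subspace_image)
  then have "closed V" "0 \<in> V"
    by (simp_all add: closed_subspace subspace_0)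
  moreover have "continuous_on V (potential z s)"
    unfolding potential_def by (intro continuous_intros)
  moreover have "{v \<in> V. potential z s v \<le> potential z s 0}
      \<subseteq> {v. (\<forall>j. z $ j = 0 \<longrightarrow> v $ j = 0) \<and> potential z s v \<le> potential z s 0}"
    by (auto simp: V_def P_def)
  then have "bounded {v \<in> V. potential z s v \<le> potential z s 0}"
    using potential_sublevel_bounded[OF assms] by (rule bounded_subset[rotated])
  ultimately obtain v0 where "v0 \<in> V" and v0: "\<And>v. v \<in> V \<Longrightarrow> potential z s v0 \<le> potential z s v"
    using continuous_attains_inf_sublevel[of V 0 "potential z s"] by blast
  then obtain Y1 where "Y1 \<in> nker X" "v0 = P Y1"
    by (auto simp: V_def)
  moreover have "potential z s Y1 \<le> potential z s Y" if "Y \<in> nker X" for Y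
    using v0[of "P Y"] that \<open>v0 = P Y1\<close> by (simp add: V_def potential_P)
  ultimately show ?thesis
    by blast
qed

(* The derivative of the potential along W in n is -4 pi Psi(exp(iY) z)(W); the term
   sum_j <xi0, X_j> W_j vanishes because pi(W) = 0. *)
lemma potential_derivative:
  assumes "W \<in> nker X" "\<And>j. s j = \<xi>0 \<bullet> X j - lam j"
  shows "((\<lambda>t. potential z s (Y + t *\<^sub>R W)) has_real_derivative (- (4*pi) * Psi lam (Aact Y z) W)) (at 0)"
proof -
  have "(\<Sum>j\<in>UNIV. (\<xi>0 \<bullet> X j) * W $ j) = 0"
    using assms(1) inner_piX[of \<xi>0 X W] by (simp add: nker_def mult.commute)
  then have Psi_eq: "Psi lam (Aact Y z) W
      = (\<Sum>j\<in>UNIV. ((cmod (z $ j))\<^sup>2 * exp (- (4*pi) * Y $ j) - s j) * W $ j)"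
    unfolding Psi_def norm_Aact_sq assms(2)
    by (simp add: algebra_simps sum.distrib sum_subtractf)
  show ?thesis
    unfolding potential_def Psi_eq
    by (auto intro!: derivative_eq_intros sum.cong simp: sum_distrib_left algebra_simps)
qed

lemma potential_minimizer_in_Psi_zero:
  assumes "Y1 \<in> nker X" "\<forall>Y\<in>nker X. potential z s Y1 \<le> potential z s Y"
    and "\<And>j. s j = \<xi>0 \<bullet> X j - lam j"
  shows "Aact Y1 z \<in> Psi_zero X lam"
  unfolding Psi_zero_def
proof (intro CollectI ballI)
  fix W assume W: "W \<in> nker X"
  have "Y1 + t *\<^sub>R W \<in> nker X" for t
    using subspace_nker assms(1) W by (intro subspace_add subspace_scale)
  then have "\<forall>t. \<bar>0 - t\<bar> < 1 \<longrightarrow> potential z s (Y1 + 0 *\<^sub>R W) \<le> potential z s (Y1 + t *\<^sub>R W)"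
    using assms(2) by simp
  with DERIV_local_min[OF potential_derivative[OF W assms(3)] zero_less_one]
  show "Psi lam (Aact Y1 z) W = 0"
    by simp
qed

lemma orbit_meets_Psi_zero_once:
  assumes "faceI X lam I \<noteq> {}" "z \<in> Cstar_Fc I"
  shows "\<exists>Y1\<in>nker X. Aorbit X z \<inter> Psi_zero X lam = {Aact Y1 z}"
proof -
  obtain \<xi>0 where \<xi>0: "\<xi>0 \<in> faceI X lam I"
    using assms(1) by blast
  define s where "s j = \<xi>0 \<bullet> X j - lam j" for j
  have "0 \<le> s j" "s j = 0 \<longleftrightarrow> z $ j = 0" for j
    using \<xi>0 assms(2) by (auto simp: s_def faceI_def Delta_def Cstar_Fc_def)
  then obtain Y1 where "Y1 \<in> nker X" and "\<forall>Y\<in>nker X. potential z s Y1 \<le> potential z s Y"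
    using potential_attains_min by blast
  then have "Aact Y1 z \<in> Psi_zero X lam"
    by (rule potential_minimizer_in_Psi_zero) (simp add: s_def)
  then have "Aorbit X z \<inter> Psi_zero X lam = {Aact Y1 z}"
    using \<open>Y1 \<in> nker X\<close> orbit_Psi_zero_at_most_one unfolding Aorbit_def by blast
  then show ?thesis
    using \<open>Y1 \<in> nker X\<close> by blast
qed

lemma moment_point_exists:
  assumes "x \<in> Psi_zero X lam"
  shows "\<exists>\<xi>. \<forall>j. \<xi> \<bullet> X j - lam j = (cmod (x $ j))\<^sup>2"
proof -
  define q where "q = (\<chi> j. (cmod (x $ j))\<^sup>2 + lam j)"
  have "q \<in> (nker X)\<^sup>\<bottom>"
    using assms by (simp add: orthogonal_comp_def orthogonal_def Psi_zero_def Psi_def q_def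
        inner_vec_def mult.commute)
  then obtain \<xi> where "q = (\<chi> j. \<xi> \<bullet> X j)"
    unfolding orthogonal_comp_nker by blast
  then have "\<forall>j. \<xi> \<bullet> X j - lam j = (cmod (x $ j))\<^sup>2"
    by (auto simp: q_def vec_eq_iff diff_eq_eq)
  then show ?thesis ..
qed

lemma moment_point_in_face:
  assumes "\<forall>j. \<xi> \<bullet> X j - lam j = (cmod (x $ j))\<^sup>2" "x \<in> Cstar_Fc I"
  shows "\<xi> \<in> faceI X lam I"
proof -
  have "lam j \<le> \<xi> \<bullet> X j" "\<xi> \<bullet> X j = lam j \<longleftrightarrow> x $ j = 0" for j
  proof -
    have "0 \<le> (cmod (x $ j))\<^sup>2"
      by simp
    with assms(1) show "lam j \<le> \<xi> \<bullet> X j"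
      by (metis diff_ge_0_iff_ge)
    from assms(1) show "\<xi> \<bullet> X j = lam j \<longleftrightarrow> x $ j = 0"
      by (metis diff_eq_diff_eq diff_self norm_eq_zero zero_eq_power2)
  qed
  then show ?thesis
    using assms(2) by (simp add: faceI_def Delta_def Cstar_Fc_def)
qed

lemma subspace_coord_sub: "subspace (coord_sub I)"
  by (auto simp: subspace_def coord_sub_def)

lemma rperp_representative:
  assumes "Y1 \<in> nker X"
  shows "\<exists>Y\<in>rperp X I. Y - Y1 \<in> coord_sub I"
proof -
  define S where "S = nker X \<inter> coord_sub I"
  have "span S = S"
    unfolding S_def by (simp add: subspace_inter subspace_nker subspace_coord_sub)
  then obtain y Y where "y \<in> S" and Y: "\<And>v. v \<in> S \<Longrightarrow> Y \<bullet> v = 0" and "Y1 = y + Y"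
    using orthogonal_subspace_decomp_exists[of S Y1] unfolding orthogonal_def by metis
  then have "Y = Y1 - y" "y \<in> nker X" "y \<in> coord_sub I"
    by (auto simp: S_def)
  then have "Y \<in> nker X" "Y - Y1 \<in> coord_sub I"
    using subspace_nker subspace_coord_sub assms by (auto intro: subspace_diff subspace_neg)
  then show ?thesis
    using Y by (auto simp: rperp_def S_def)
qed

(* Elements of r that agree off I coincide: their difference lies in n /\ R^I and is orthogonal
   to itself. *)
lemma rperp_unique:
  assumes "Y \<in> rperp X I" "Y' \<in> rperp X I" "Y - Y' \<in> coord_sub I"
  shows "Y = Y'"
proof -
  have "Y - Y' \<in> nker X"
    using assms(1,2) subspace_nker by (auto simp: rperp_def intro: subspace_diff)
  then have "Y \<bullet> (Y - Y') = 0" "Y' \<bullet> (Y - Y') = 0"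
    using assms by (auto simp: rperp_def)
  then have "(Y - Y') \<bullet> (Y - Y') = 0"
    by (simp add: inner_diff_left)
  then show ?thesis
    by simp
qed

lemma orbit_data_exists:
  assumes "faceI X lam I \<noteq> {}" "z \<in> Cstar_Fc I"
  shows "\<exists>x \<xi> Y. x \<in> Psi_zero X lam \<and> \<xi> \<in> faceI X lam I \<and> Y \<in> rperp X I \<and>
           Aorbit X z \<inter> Psi_zero X lam = {x} \<and> Aact Y z = x \<and>
           (\<forall>j. \<xi> \<bullet> X j - lam j = (cmod (x $ j))\<^sup>2)"
proof -
  obtain Y1 where "Y1 \<in> nker X" and orbit: "Aorbit X z \<inter> Psi_zero X lam = {Aact Y1 z}"
    using orbit_meets_Psi_zero_once assms by blast
  define x where "x = Aact Y1 z"
  have orbit_x: "Aorbit X z \<inter> Psi_zero X lam = {x}" and x: "x \<in> Psi_zero X lam"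
    using orbit by (auto simp: x_def)
  obtain \<xi> where \<xi>: "\<forall>j. \<xi> \<bullet> X j - lam j = (cmod (x $ j))\<^sup>2"
    using moment_point_exists[OF x] by blast
  have "x \<in> Cstar_Fc I"
    using Aact_Cstar_Fc[OF assms(2)] by (simp add: x_def)
  with \<xi> have "\<xi> \<in> faceI X lam I"
    by (rule moment_point_in_face)
  obtain Y where "Y \<in> rperp X I" and "Y - Y1 \<in> coord_sub I"
    using rperp_representative[OF \<open>Y1 \<in> nker X\<close>] by blast
  moreover from this have "Aact Y z = x"
    using Aact_eq_iff[OF assms(2)] by (simp add: x_def)
  ultimately show ?thesis
    using x \<xi> \<open>\<xi> \<in> faceI X lam I\<close> orbit_x by blast
qed

lemma orbit_data_unique:
  assumes "bounded (Delta X lam)" "z \<in> Cstar_Fc I"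
    and "\<xi> \<in> Delta X lam" "Y \<in> rperp X I" "Aorbit X z \<inter> Psi_zero X lam = {x}" "Aact Y z = x"
      "\<forall>j. \<xi> \<bullet> X j - lam j = (cmod (x $ j))\<^sup>2"
    and "Y' \<in> rperp X I" "Aorbit X z \<inter> Psi_zero X lam = {x'}" "Aact Y' z = x'"
      "\<forall>j. \<xi>' \<bullet> X j - lam j = (cmod (x' $ j))\<^sup>2"
  shows "(x', \<xi>', Y') = (x, \<xi>, Y)"
proof -
  have "x' = x"
    using assms(5,9) by simp
  then have "\<xi> \<bullet> X j = \<xi>' \<bullet> X j" for j
    using assms(7)[rule_format, of j] assms(11)[rule_format, of j] by simp
  then have "\<xi> = \<xi>'"
    by (rule Delta_bounded_normals_injective[OF assms(1,3)])
  moreover have "Aact Y' z = Aact Y z"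
    using assms(6,10) \<open>x' = x\<close> by simp
  then have "Y' - Y \<in> coord_sub I"
    using Aact_eq_iff[OF assms(2)] by blast
  then have "Y' = Y"
    by (rule rperp_unique[OF assms(8,4)])
  ultimately show ?thesis
    using \<open>x' = x\<close> by simp
qed

theorem mainTheorem11:
  fixes X :: "'d::finite \<Rightarrow> real^'n::finite" and lam :: "'d \<Rightarrow> real"
    and I :: "'d set" and F :: "(real^'n) set" and z :: "complex^'d"
  assumes "polytope (Delta X lam)"
    and "aff_dim (Delta X lam) = int CARD('n)"
    and "\<forall>j. facetj X lam j facet_of Delta X lam"
    and "inj (facetj X lam)"
    and "{G. G facet_of Delta X lam} = range (facetj X lam)"
    and "F = faceI X lam I" and "F \<noteq> {}"
    and "z \<in> Cstar_Fc I"
  shows "\<exists>!p. case p of (x, \<xi>, Y) \<Rightarrow>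
            x \<in> Psi_zero X lam \<and> \<xi> \<in> F \<and> Y \<in> rperp X I \<and>
            Aorbit X z \<inter> Psi_zero X lam = {x} \<and> Aact Y z = x \<and>
            (\<forall>j. \<xi> \<bullet> X j - lam j = (cmod (x $ j))\<^sup>2)"
proof -
  obtain x \<xi> Y where data: "x \<in> Psi_zero X lam" "\<xi> \<in> F" "Y \<in> rperp X I"
      "Aorbit X z \<inter> Psi_zero X lam = {x}" "Aact Y z = x" "\<forall>j. \<xi> \<bullet> X j - lam j = (cmod (x $ j))\<^sup>2"
    using orbit_data_exists[of X lam I z] assms(6-8) by blast
  have "\<xi> \<in> Delta X lam"
    using data(2) assms(6) by (simp add: faceI_def)
  note unique = orbit_data_unique[OF polytope_imp_bounded[OF assms(1)] assms(8) this data(3-6)]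
  show ?thesis
  proof (rule ex1I[of _ "(x, \<xi>, Y)"], goal_cases)
    case 1
    show ?case
      using data by simp
  next
    case (2 p)
    obtain x' \<xi>' Y' where p: "p = (x', \<xi>', Y')"
      by (cases p)
    show ?case
      unfolding p by (rule unique) (use 2 p in simp_all)
  qed
qed

end
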